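(* Let $G=(V_1,E_1)$ and $H=(V_2,E_2)$ be digraphs with weak NU polymorphisms $t_1$ and $t_2$ respectively, both of the same arity $n$. Define $w$ on $V_1\dot\cup V_2$ by $w(x_1,\dots,x_n)=t_1(x_1,\dots,x_n)$ if $x_1,\dots,x_n\in V_1$; $w(x_1,\dots,x_n)=t_2(x_1,\dots,x_n)$ if $x_1,\dots,x_n\in V_2$; and otherwise $w(x_1,\dots,x_n)=x_i$ where $i$ is minimal with $x_i\in V_1$. Then $w$ is a weak NU polymorphism of $G\mathbin{\dot\cup}H$ and of $G\mathbin{\overline{\cup}}H$.
   Context: Digraphs are finite and loopless. $G\mathbin{\dot\cup}H$ is the disjoint union digraph on $V_1\dot\cup V_2$ with edges $E_1\cup E_2$; $G\mathbin{\overline{\cup}}H$ is the same structure with two additional unary relations interpreted as $V_1$ and $V_2$. A polymorphism of arity $n$ of a structure is a map from $n$-tuples of elements to elements which, applied coordinatewise to any $n$ tuples of a relation, yields a tuple of that relation. A weak NU polymorphism is an idempotent polymorphism $w$ of arity $n>1$ with $w(y,x,\dots,x)=w(x,y,x,\dots,x)=\dots=w(x,\dots,x,y)$ for all $x,y$. *)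

theory Defs
  imports Main
begin

definition digraph :: "'a set \<Rightarrow> ('a \<times> 'a) set \<Rightarrow> bool" where
  "digraph V E \<longleftrightarrow> finite V \<and> E \<subseteq> V \<times> V \<and> (\<forall>x. (x, x) \<notin> E)"

text \<open>Relational structure with domain V, one binary relation E and a set Us of unary relations.
  An n-ary operation is a map on lists of length n (n-tuples).\<close>
definition polymorphism :: "'a set \<Rightarrow> ('a \<times> 'a) set \<Rightarrow> 'a set set \<Rightarrow> nat \<Rightarrow> ('a list \<Rightarrow> 'a) \<Rightarrow> bool" where
  "polymorphism V E Us n f \<longleftrightarrow>
     (\<forall>xs. length xs = n \<and> set xs \<subseteq> V \<longrightarrow> f xs \<in> V) \<and>
     (\<forall>xs ys. length xs = n \<and> length ys = n \<and> (\<forall>i<n. (xs ! i, ys ! i) \<in> E) \<longrightarrow> (f xs, f ys) \<in> E) \<and>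
     (\<forall>U\<in>Us. \<forall>xs. length xs = n \<and> set xs \<subseteq> U \<longrightarrow> f xs \<in> U)"

definition weak_nu_polymorphism :: "'a set \<Rightarrow> ('a \<times> 'a) set \<Rightarrow> 'a set set \<Rightarrow> nat \<Rightarrow> ('a list \<Rightarrow> 'a) \<Rightarrow> bool" where
  "weak_nu_polymorphism V E Us n f \<longleftrightarrow>
     n > 1 \<and> polymorphism V E Us n f \<and>
     (\<forall>x\<in>V. f (replicate n x) = x) \<and>
     (\<forall>x\<in>V. \<forall>y\<in>V. \<forall>i<n. \<forall>j<n. f ((replicate n x)[i := y]) = f ((replicate n x)[j := y]))"

definition dunion_V :: "'a set \<Rightarrow> 'b set \<Rightarrow> ('a + 'b) set" where
  "dunion_V V1 V2 = Inl ` V1 \<union> Inr ` V2"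

definition dunion_E :: "('a \<times> 'a) set \<Rightarrow> ('b \<times> 'b) set \<Rightarrow> (('a + 'b) \<times> ('a + 'b)) set" where
  "dunion_E E1 E2 = (\<lambda>(x, y). (Inl x, Inl y)) ` E1 \<union> (\<lambda>(x, y). (Inr x, Inr y)) ` E2"

definition comb_op :: "nat \<Rightarrow> ('a list \<Rightarrow> 'a) \<Rightarrow> ('b list \<Rightarrow> 'b) \<Rightarrow> ('a + 'b) list \<Rightarrow> 'a + 'b" where
  "comb_op n t1 t2 xs =
     (if \<forall>x\<in>set xs. isl x then Inl (t1 (map projl xs))
      else if \<forall>x\<in>set xs. \<not> isl x then Inr (t2 (map projr xs))
      else xs ! (LEAST i. i < n \<and> isl (xs ! i)))"

end

theory Submission
  imports Defs
begin

text \<open>A tuple over the disjoint union lies entirely in one component or is mixed. On a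
  one-component tuple w is t1 or t2 transported along the injection, so it inherits their
  polymorphism properties; on a mixed tuple w returns the first left entry. Edges of
  the disjoint union never cross components, so coordinatewise adjacent tuples have the same
  component pattern: they are handled by the same clause, and in the mixed case the first
  left entries sit at the same coordinate and are adjacent. A near-unanimous tuple with x
  and y in different components is mixed, and its first left entry is whichever of x, y is
  left, independently of the position of y.\<close>

lemma map_Inl_projl: "\<forall>x\<in>set xs. isl x \<Longrightarrow> map Inl (map projl xs) = xs"
  by (induction xs) auto

lemma map_Inr_projr: "\<forall>x\<in>set xs. \<not> isl x \<Longrightarrow> map Inr (map projr xs) = xs"
  by (induction xs) auto

lemma Inl_Inr_list_cases:
  obtains (Left) as where "xs = map Inl as"
  | (Right) bs where "xs = map Inr bs" "bs \<noteq> []"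
  | (Mixed) "\<exists>x\<in>set xs. isl x" "\<exists>x\<in>set xs. \<not> isl x"
proof (cases "\<forall>x\<in>set xs. isl x")
  case True
  then show ?thesis using Left map_Inl_projl by metis
next
  case notLeft: False
  show ?thesis
  proof (cases "\<forall>x\<in>set xs. \<not> isl x")
    case True
    with notLeft have "map projr xs \<noteq> []" by auto
    then show ?thesis using Right map_Inr_projr True by metis
  next
    case False
    with notLeft show ?thesis using Mixed by blast
  qed
qed

lemma comb_op_map_Inl [simp]: "comb_op n t1 t2 (map Inl as) = Inl (t1 as)"
  by (simp add: comb_op_def comp_def)

lemma comb_op_map_Inr [simp]: "bs \<noteq> [] \<Longrightarrow> comb_op n t1 t2 (map Inr bs) = Inr (t2 bs)"
  by (cases bs) (simp_all add: comb_op_def comp_def)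

lemma comb_op_mixed:
  assumes "length xs = n" "\<exists>x\<in>set xs. isl x" "\<exists>x\<in>set xs. \<not> isl x"
  obtains k where "k < n" "isl (xs ! k)" "\<forall>j<k. \<not> isl (xs ! j)" "comb_op n t1 t2 xs = xs ! k"
proof -
  define k where "k = (LEAST i. i < n \<and> isl (xs ! i))"
  from assms(1,2) obtain i where "i < n" "isl (xs ! i)" by (auto simp: in_set_conv_nth)
  then have k: "k < n" "isl (xs ! k)"
    unfolding k_def by (metis (mono_tags, lifting) LeastI)+
  have "\<forall>j<k. \<not> isl (xs ! j)"
  proof (intro allI impI)
    fix j assume "j < k"
    then have "\<not> (j < n \<and> isl (xs ! j))" unfolding k_def by (rule not_less_Least)
    with \<open>j < k\<close> k(1) show "\<not> isl (xs ! j)" by simp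
  qed
  moreover have "comb_op n t1 t2 xs = xs ! k"
  proof -
    have "\<not> (\<forall>x\<in>set xs. isl x)" "\<not> (\<forall>x\<in>set xs. \<not> isl x)"
      using assms(2,3) by auto
    then show ?thesis unfolding comb_op_def k_def by (simp only: if_False)
  qed
  ultimately show ?thesis using that k by blast
qed

lemma comb_op_mixed_in_set:
  assumes "length xs = n" "\<exists>x\<in>set xs. isl x" "\<exists>x\<in>set xs. \<not> isl x"
  shows "comb_op n t1 t2 xs \<in> set xs" "isl (comb_op n t1 t2 xs)"
  using comb_op_mixed[OF assms] by (metis nth_mem assms(1))+

lemma Inl_dunion_E_iff: "(Inl a, y) \<in> dunion_E E1 E2 \<longleftrightarrow> (\<exists>b. y = Inl b \<and> (a, b) \<in> E1)"
  by (auto simp: dunion_E_def)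

lemma Inr_dunion_E_iff: "(Inr a, y) \<in> dunion_E E1 E2 \<longleftrightarrow> (\<exists>b. y = Inr b \<and> (a, b) \<in> E2)"
  by (auto simp: dunion_E_def)

lemma dunion_E_isl: "(x, y) \<in> dunion_E E1 E2 \<Longrightarrow> isl x = isl y"
  by (auto simp: dunion_E_def)

lemma comb_op_closed:
  assumes "polymorphism V1 E1 Us1 n t1" "polymorphism V2 E2 Us2 n t2"
    and "length xs = n" "set xs \<subseteq> dunion_V V1 V2"
  shows "comb_op n t1 t2 xs \<in> dunion_V V1 V2"
proof (cases xs rule: Inl_Inr_list_cases)
  case (Left as)
  then have "set as \<subseteq> V1" using assms(4) by (auto simp: dunion_V_def)
  then have "t1 as \<in> V1" using assms(1,3) Left by (simp add: polymorphism_def)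
  then show ?thesis using Left by (simp add: dunion_V_def)
next
  case (Right bs)
  then have "set bs \<subseteq> V2" using assms(4) by (auto simp: dunion_V_def)
  then have "t2 bs \<in> V2" using assms(2,3) Right by (simp add: polymorphism_def)
  then show ?thesis using Right by (simp add: dunion_V_def)
next
  case Mixed
  then show ?thesis using comb_op_mixed_in_set(1)[OF assms(3)] assms(4) by blast
qed

lemma comb_op_preserves_edges:
  assumes p1: "polymorphism V1 E1 Us1 n t1" and p2: "polymorphism V2 E2 Us2 n t2"
    and len: "length xs = n" "length ys = n"
    and adj: "\<forall>i<n. (xs ! i, ys ! i) \<in> dunion_E E1 E2"
  shows "(comb_op n t1 t2 xs, comb_op n t1 t2 ys) \<in> dunion_E E1 E2"
proof -
  have same_side: "\<forall>i<n. isl (xs ! i) = isl (ys ! i)"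
    using adj dunion_E_isl by blast
  show ?thesis
  proof (cases xs rule: Inl_Inr_list_cases)
    case (Left as)
    then have "\<forall>y\<in>set ys. isl y"
      using same_side len by (auto simp: in_set_conv_nth)
    then obtain bs where ys: "ys = map Inl bs" using map_Inl_projl by metis
    have "\<forall>i<n. (as ! i, bs ! i) \<in> E1"
      using adj len by (auto simp: Left ys Inl_dunion_E_iff)
    then have "(t1 as, t1 bs) \<in> E1"
      using p1 len by (auto simp: polymorphism_def Left ys)
    then show ?thesis by (simp add: Left ys Inl_dunion_E_iff)
  next
    case (Right cs)
    then have "\<forall>y\<in>set ys. \<not> isl y"
      using same_side len by (auto simp: in_set_conv_nth)
    then obtain ds where ys: "ys = map Inr ds" using map_Inr_projr by metis
    have "ds \<noteq> []" using len Right ys by auto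
    have "\<forall>i<n. (cs ! i, ds ! i) \<in> E2"
      using adj len by (auto simp: Right ys Inr_dunion_E_iff)
    then have "(t2 cs, t2 ds) \<in> E2"
      using p2 len by (auto simp: polymorphism_def Right ys)
    then show ?thesis using Right \<open>ds \<noteq> []\<close> by (simp add: ys Inr_dunion_E_iff)
  next
    case Mixed
    then have "\<exists>y\<in>set ys. isl y" "\<exists>y\<in>set ys. \<not> isl y"
      using same_side len by (fastforce simp: in_set_conv_nth)+
    obtain k where k: "k < n" "isl (xs ! k)" "\<forall>j<k. \<not> isl (xs ! j)"
      "comb_op n t1 t2 xs = xs ! k"
      using comb_op_mixed[OF len(1) Mixed] .
    obtain l where l: "l < n" "isl (ys ! l)" "\<forall>j<l. \<not> isl (ys ! j)"
      "comb_op n t1 t2 ys = ys ! l"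
      using comb_op_mixed[OF len(2) \<open>\<exists>y\<in>set ys. isl y\<close> \<open>\<exists>y\<in>set ys. \<not> isl y\<close>] .
    have "k = l"
      using k l same_side by (metis linorder_neqE_nat order.strict_trans)
    then show ?thesis using k l adj by simp
  qed
qed

lemma comb_op_preserves_components:
  assumes p1: "polymorphism V1 E1 Us1 n t1" and p2: "polymorphism V2 E2 Us2 n t2"
    and "n > 0" "U \<in> {Inl ` V1, Inr ` V2}" "length xs = n" "set xs \<subseteq> U"
  shows "comb_op n t1 t2 xs \<in> U"
proof -
  have "set xs \<subseteq> dunion_V V1 V2" using assms(4,6) by (auto simp: dunion_V_def)
  then have closed: "comb_op n t1 t2 xs \<in> dunion_V V1 V2"
    using comb_op_closed[OF p1 p2 assms(5)] by blast
  have "xs \<noteq> []" using assms(3,5) by auto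
  then obtain x where "x \<in> set xs" by (meson list.set_sel(1))
  then have U: "U = (if isl x then Inl ` V1 else Inr ` V2)"
    using assms(4,6) by auto
  show ?thesis
  proof (cases xs rule: Inl_Inr_list_cases)
    case (Left as)
    then show ?thesis using closed U \<open>x \<in> set xs\<close> by (auto simp: dunion_V_def)
  next
    case (Right bs)
    then show ?thesis using closed U \<open>x \<in> set xs\<close> by (auto simp: dunion_V_def)
  next
    case Mixed
    then show ?thesis using comb_op_mixed_in_set(1)[OF assms(5) Mixed] assms(6) by blast
  qed
qed

lemma comb_op_replicate_update_Inl:
  "comb_op n t1 t2 ((replicate n (Inl a))[i := Inl b]) = Inl (t1 ((replicate n a)[i := b]))"
proof -
  have "(replicate n (Inl a))[i := Inl b] = map Inl ((replicate n a)[i := b])"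
    by (simp add: map_update)
  then show ?thesis using comb_op_map_Inl by metis
qed

lemma comb_op_replicate_update_Inr:
  assumes "n \<noteq> 0"
  shows "comb_op n t1 t2 ((replicate n (Inr a))[i := Inr b]) = Inr (t2 ((replicate n a)[i := b]))"
proof -
  have "(replicate n (Inr a))[i := Inr b] = map Inr ((replicate n a)[i := b])"
    by (simp add: map_update)
  moreover have "(replicate n a)[i := b] \<noteq> []" using assms by simp
  ultimately show ?thesis using comb_op_map_Inr by metis
qed

lemma comb_op_idempotent:
  assumes w1: "weak_nu_polymorphism V1 E1 Us1 n t1" and w2: "weak_nu_polymorphism V2 E2 Us2 n t2"
    and "x \<in> dunion_V V1 V2"
  shows "comb_op n t1 t2 (replicate n x) = x"
proof (cases x)
  case (Inl a)
  then have "a \<in> V1" using assms(3) by (auto simp: dunion_V_def)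
  have "comb_op n t1 t2 (replicate n x) = comb_op n t1 t2 (map Inl (replicate n a))"
    using Inl by simp
  also have "\<dots> = Inl (t1 (replicate n a))" by (rule comb_op_map_Inl)
  also have "\<dots> = x"
    using w1 Inl \<open>a \<in> V1\<close> by (simp add: weak_nu_polymorphism_def)
  finally show ?thesis .
next
  case (Inr b)
  then have "b \<in> V2" using assms(3) by (auto simp: dunion_V_def)
  have "replicate n b \<noteq> []" using w2 by (simp add: weak_nu_polymorphism_def)
  have "comb_op n t1 t2 (replicate n x) = comb_op n t1 t2 (map Inr (replicate n b))"
    using Inr by simp
  also have "\<dots> = Inr (t2 (replicate n b))" by (rule comb_op_map_Inr) fact
  also have "\<dots> = x"
    using w2 Inr \<open>b \<in> V2\<close> by (simp add: weak_nu_polymorphism_def)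
  finally show ?thesis .
qed

lemma comb_op_near_unanimous_mixed:
  assumes "isl x \<noteq> isl y" "1 < n" "i < n"
  shows "comb_op n t1 t2 ((replicate n x)[i := y]) = (if isl x then x else y)"
proof -
  let ?xs = "(replicate n x)[i := y]"
  obtain j where "j < n" "j \<noteq> i"
    using assms(2,3) by (metis less_trans nat_neq_iff zero_less_one)
  then have x: "x \<in> set ?xs"
    by (metis length_list_update length_replicate nth_list_update_neq nth_mem nth_replicate)
  have y: "y \<in> set ?xs" using assms(3) by (simp add: set_update_memI)
  have "\<exists>z\<in>set ?xs. isl z" "\<exists>z\<in>set ?xs. \<not> isl z"
    using x y assms(1) by metis+
  then have "comb_op n t1 t2 ?xs \<in> set ?xs" "isl (comb_op n t1 t2 ?xs)"
    using comb_op_mixed_in_set[of ?xs n] by simp_all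
  moreover have "set ?xs \<subseteq> {x, y}"
    using set_update_subset_insert[of "replicate n x" i y] by auto
  ultimately show ?thesis using assms(1) by auto
qed

lemma comb_op_near_unanimous:
  assumes w1: "weak_nu_polymorphism V1 E1 Us1 n t1" and w2: "weak_nu_polymorphism V2 E2 Us2 n t2"
    and "x \<in> dunion_V V1 V2" "y \<in> dunion_V V1 V2" "i < n" "j < n"
  shows "comb_op n t1 t2 ((replicate n x)[i := y]) = comb_op n t1 t2 ((replicate n x)[j := y])"
proof -
  have "1 < n" using w1 by (simp add: weak_nu_polymorphism_def)
  consider (Left) a b where "x = Inl a" "y = Inl b" "a \<in> V1" "b \<in> V1"
    | (Right) a b where "x = Inr a" "y = Inr b" "a \<in> V2" "b \<in> V2"
    | (Mixed) "isl x \<noteq> isl y"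
    using assms(3,4) by (auto simp: dunion_V_def)
  then show ?thesis
  proof cases
    case Left
    with w1 assms(5,6) have "t1 ((replicate n a)[i := b]) = t1 ((replicate n a)[j := b])"
      unfolding weak_nu_polymorphism_def by blast
    then show ?thesis using Left by (simp only: comb_op_replicate_update_Inl)
  next
    case Right
    with w2 assms(5,6) have "t2 ((replicate n a)[i := b]) = t2 ((replicate n a)[j := b])"
      unfolding weak_nu_polymorphism_def by blast
    moreover have "n \<noteq> 0" using \<open>1 < n\<close> by simp
    ultimately show ?thesis using Right comb_op_replicate_update_Inr by metis
  next
    case Mixed
    then show ?thesis
      using comb_op_near_unanimous_mixed[OF Mixed \<open>1 < n\<close>] assms(5,6) by simp
  qed
qed

lemma comb_op_weak_nu_polymorphism:
  assumes w1: "weak_nu_polymorphism V1 E1 Us1 n t1" and w2: "weak_nu_polymorphism V2 E2 Us2 n t2"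
    and Us: "Us \<subseteq> {Inl ` V1, Inr ` V2}"
  shows "weak_nu_polymorphism (dunion_V V1 V2) (dunion_E E1 E2) Us n (comb_op n t1 t2)"
proof -
  have n: "n > 1" and p1: "polymorphism V1 E1 Us1 n t1" and p2: "polymorphism V2 E2 Us2 n t2"
    using w1 w2 by (auto simp: weak_nu_polymorphism_def)
  have "polymorphism (dunion_V V1 V2) (dunion_E E1 E2) Us n (comb_op n t1 t2)"
    unfolding polymorphism_def
    using comb_op_closed[OF p1 p2] comb_op_preserves_edges[OF p1 p2]
      comb_op_preserves_components[OF p1 p2] n Us by auto
  then show ?thesis
    unfolding weak_nu_polymorphism_def
    using n comb_op_idempotent[OF w1 w2] comb_op_near_unanimous[OF w1 w2] by blast
qed

theorem lemma4p1:
  fixes V1 :: "'a set" and E1 :: "('a \<times> 'a) set" and V2 :: "'b set" and E2 :: "('b \<times> 'b) set"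
    and t1 :: "'a list \<Rightarrow> 'a" and t2 :: "'b list \<Rightarrow> 'b" and n :: nat
  assumes "digraph V1 E1" and "digraph V2 E2"
    and "weak_nu_polymorphism V1 E1 {} n t1"
    and "weak_nu_polymorphism V2 E2 {} n t2"
  shows "weak_nu_polymorphism (dunion_V V1 V2) (dunion_E E1 E2) {} n (comb_op n t1 t2) \<and>
         weak_nu_polymorphism (dunion_V V1 V2) (dunion_E E1 E2) {Inl ` V1, Inr ` V2} n (comb_op n t1 t2)"
  using comb_op_weak_nu_polymorphism[OF assms(3,4)] by blast

end
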